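(* Let $\langle-,-\rangle$ be a cyclic form on $C$. Then: (1) $\langle e,\mu(v_1,\dots,v_n)\rangle=0$ for $n\le m-1$; (2) $\langle\mu(v_1,\dots,v_n),\mu(w_1,\dots,w_l)\rangle=0$ for $l\le m-1$ whenever each $v_i\in\mathrm{Span}\{w_1,\dots,w_l\}$.
   Context: $k$ is a field of characteristic zero, $V$ a $k$-vector space of dimension $m\ge1$ in degree $0$, $A=\mathrm{Sym}(V)$, and $C=A^{\textup{!`}}$ its Koszul dual coalgebra, the exterior coalgebra on $sV$ with elements $\mu(v_1,\dots,v_n)=sv_1\wedge\cdots\wedge sv_n$ (in all statements the $v_i$, resp. $w_j$, are taken linearly independent), counit/coaugmentation element $e$ (the empty wedge), and coproduct $\triangle\mu(v_1,\dots,v_n)=\sum_{p=0}^n\sum_{\sigma\in Sh_{p,n-p}}\mathrm{sgn}(\sigma)\,\mu(v_{\sigma(1)},\dots,v_{\sigma(p)})\otimes\mu(v_{\sigma(p+1)},\dots,v_{\sigma(n)})$ over $(p,n-p)$-shuffles. A symmetric bilinear form of degree $-d$ on $C$ is $\langle-,-\rangle:C\otimes C\to k[d]$ with $\langle a,b\rangle=(-1)^{|a||b|}\langle b,a\rangle$; it is cyclic if $\sum\langle a,b^2\rangle b^1=\sum\langle a^1,b\rangle a^2$ for all $a,b\in C$, where $\triangle(a)=\sum a^1\otimes a^2$, $\triangle(b)=\sum b^1\otimes b^2$. *)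

theory Defs
  imports "HOL-Combinatorics.Permutations"
begin

text \<open>Model: V = k^m with standard basis b_0,...,b_{m-1}; vectors are functions
  nat => k vanishing at coordinates >= m. C = exterior coalgebra on sV, with basis
  e_S = s b_{s_1} wedge ... wedge s b_{s_p} for S = {s_1 < ... < s_p} a subset of {..<m};
  an element of C is its coefficient function on such sets.  C (x) C is represented by
  coefficient functions on pairs of sets.\<close>

definition vecs :: "nat \<Rightarrow> (nat \<Rightarrow> 'k::field) set" where
  "vecs m = {x. \<forall>i\<ge>m. x i = 0}"

definition Cel :: "nat \<Rightarrow> (nat set \<Rightarrow> 'k::field) set" where
  "Cel m = {a. \<forall>S. \<not> S \<subseteq> {..<m} \<longrightarrow> a S = 0}"

definition basis_el :: "nat set \<Rightarrow> nat set \<Rightarrow> 'k::field" where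
  "basis_el S = (\<lambda>T. if T = S then 1 else 0)"

definition unit_el :: "nat set \<Rightarrow> 'k::field" where
  "unit_el = basis_el {}"

text \<open>Sign of the shuffle putting T first and U second (both listed increasingly).\<close>
definition shsign :: "nat set \<Rightarrow> nat set \<Rightarrow> 'k::field" where
  "shsign T U = (-1) ^ card {(t, u). t \<in> T \<and> u \<in> U \<and> u < t}"

definition coprod :: "(nat set \<Rightarrow> 'k::field) \<Rightarrow> nat set \<Rightarrow> nat set \<Rightarrow> 'k" where
  "coprod a T U = (if T \<inter> U = {} then shsign T U * a (T \<union> U) else 0)"

text \<open>mu(v_0,...,v_{n-1}) = s v_0 wedge ... wedge s v_{n-1}, coefficient on e_S.\<close>
definition mu :: "nat \<Rightarrow> (nat \<Rightarrow> nat \<Rightarrow> 'k::field) \<Rightarrow> nat set \<Rightarrow> 'k" where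
  "mu n v S = (if finite S \<and> card S = n then
      (\<Sum>p\<in>{p. p permutes {..<n}}. of_int (sign p) *
          (\<Prod>i<n. v i (sorted_list_of_set S ! p i)))
    else 0)"

text \<open>Bilinear form on C given by its values B S T = <e_S, e_T> on basis elements.\<close>
definition form :: "nat \<Rightarrow> (nat set \<Rightarrow> nat set \<Rightarrow> 'k::field)
    \<Rightarrow> (nat set \<Rightarrow> 'k) \<Rightarrow> (nat set \<Rightarrow> 'k) \<Rightarrow> 'k" where
  "form m B a b = (\<Sum>S\<in>Pow {..<m}. \<Sum>T\<in>Pow {..<m}. a S * b T * B S T)"

text \<open>Symmetric bilinear form of degree -d (degree of e_S is card S).\<close>
definition symmetric_form_deg :: "nat \<Rightarrow> int \<Rightarrow> (nat set \<Rightarrow> nat set \<Rightarrow> 'k::field) \<Rightarrow> bool" where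
  "symmetric_form_deg m d B \<longleftrightarrow>
     (\<forall>S\<subseteq>{..<m}. \<forall>T\<subseteq>{..<m}.
        (B S T \<noteq> 0 \<longrightarrow> int (card S + card T) = d) \<and>
        B S T = (-1) ^ (card S * card T) * B T S)"

text \<open>Cyclicity: sum <a,b^2> b^1 = sum <a^1,b> a^2 in C, for all a, b in C.\<close>
definition cyclic_form :: "nat \<Rightarrow> (nat set \<Rightarrow> nat set \<Rightarrow> 'k::field) \<Rightarrow> bool" where
  "cyclic_form m B \<longleftrightarrow>
     (\<forall>a\<in>Cel m. \<forall>b\<in>Cel m. \<forall>X\<subseteq>{..<m}.
        (\<Sum>U\<in>Pow {..<m}. coprod b X U * form m B a (basis_el U))
      = (\<Sum>Y\<in>Pow {..<m}. coprod a Y X * form m B (basis_el Y) b))"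

definition lin_indep :: "nat \<Rightarrow> (nat \<Rightarrow> nat \<Rightarrow> 'k::field) \<Rightarrow> bool" where
  "lin_indep n v \<longleftrightarrow> (\<forall>c. (\<forall>j. (\<Sum>i<n. c i * v i j) = 0) \<longrightarrow> (\<forall>i<n. c i = 0))"

definition in_span :: "nat \<Rightarrow> (nat \<Rightarrow> nat \<Rightarrow> 'k::field) \<Rightarrow> (nat \<Rightarrow> 'k) \<Rightarrow> bool" where
  "in_span l w x \<longleftrightarrow> (\<exists>c. \<forall>j. x j = (\<Sum>i<l. c i * w i j))"

end

theory Submission
  imports Defs "Jordan_Normal_Form.Determinant"
begin

(*
  Cyclicity, tested on a single basis vector X = {x}, says <a, b_x> = <a^x, b>, where b_x is the
  part of the coproduct of b whose first tensor factor is e_x, and a^x the part of the coproduct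
  of a whose second factor is e_x.

  (1) For a = e_x and b = e_T with x outside T this reads 0 = <e, e_T>. So <e, e_T> vanishes for
  every T that misses a basis vector, in particular whenever card T < m, and these are the only
  basis elements occurring in mu(v_1, ..., v_n) for n < m.

  (2) Summing over x against a linear functional lam shows that contraction with lam from the
  left and from the right are adjoint for the form. As l < m, some lam kills w_1, ..., w_l, and
  some x has lam(x) = 1. Contracting mu(x, w_1, ..., w_l) from the left gives mu(w_1, ..., w_l),
  while contracting mu(v_1, ..., v_n) from the right gives 0, as lam kills every v_i in
  Span{w_j}. In coordinates both contractions are Laplace expansions of a determinant along the
  column that carries lam.
*)

section \<open>Determinants of families of columns\<close>

definition det_cols :: "nat \<Rightarrow> (nat \<Rightarrow> nat \<Rightarrow> 'a::comm_ring_1) \<Rightarrow> 'a" where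
  "det_cols N F = det (mat N N (\<lambda>(i, k). F k i))"

lemma det_cols_cong:
  "(\<And>k i. k < N \<Longrightarrow> i < N \<Longrightarrow> F k i = G k i) \<Longrightarrow> det_cols N F = det_cols N G"
  unfolding det_cols_def by (intro arg_cong[of _ _ det] eq_matI) auto

lemma det_cols_expand:
  "det_cols N F = (\<Sum>p\<in>{p. p permutes {..<N}}. of_int (sign p) * (\<Prod>i<N. F (p i) i))"
  unfolding det_cols_def det_def'[OF mat_carrier] atLeast0LessThan
proof (rule sum.cong)
  fix p assume "p \<in> {p. p permutes {..<N}}"
  then have "\<And>i. i < N \<Longrightarrow> p i < N" using permutes_in_image by fastforce
  then show "signof p * (\<Prod>i<N. mat N N (\<lambda>(i, k). F k i) $$ (i, p i))
      = of_int (sign p) * (\<Prod>i<N. F (p i) i)"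
    by simp
qed simp

lemma det_cols_column_expansion:
  assumes "k < N"
  shows "det_cols N (F(k := H)) = (\<Sum>i<N. H i * cofactor (mat N N (\<lambda>(i, c). F c i)) i k)"
proof -
  let ?A = "mat N N (\<lambda>(i, c). (F(k := H)) c i)"
  have "det_cols N (F(k := H)) = (\<Sum>i<N. ?A $$ (i, k) * cofactor ?A i k)"
    unfolding det_cols_def using assms by (intro laplace_expansion_column) auto
  also have "\<dots> = (\<Sum>i<N. H i * cofactor (mat N N (\<lambda>(i, c). F c i)) i k)"
  proof (intro sum.cong refl)
    fix i assume "i \<in> {..<N}"
    moreover have "mat_delete ?A i k = mat_delete (mat N N (\<lambda>(i, c). F c i)) i k"
      by (intro eq_matI) (auto simp: mat_delete_def)
    ultimately show "?A $$ (i, k) * cofactor ?A i k = H i * cofactor (mat N N (\<lambda>(i, c). F c i)) i k"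
      using assms by (simp add: cofactor_def)
  qed
  finally show ?thesis .
qed

lemma det_cols_sum_column:
  assumes "k < N"
  shows "det_cols N (F(k := (\<lambda>i. \<Sum>j\<in>J. c j * G j i))) = (\<Sum>j\<in>J. c j * det_cols N (F(k := G j)))"
proof -
  let ?cof = "\<lambda>i. cofactor (mat N N (\<lambda>(i, c). F c i)) i k"
  have "det_cols N (F(k := (\<lambda>i. \<Sum>j\<in>J. c j * G j i))) = (\<Sum>i<N. \<Sum>j\<in>J. c j * (G j i * ?cof i))"
    by (simp add: det_cols_column_expansion[OF assms] sum_distrib_right mult.assoc)
  also have "\<dots> = (\<Sum>j\<in>J. \<Sum>i<N. c j * (G j i * ?cof i))"
    by (rule sum.swap)
  also have "\<dots> = (\<Sum>j\<in>J. c j * det_cols N (F(k := G j)))"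
    by (simp add: det_cols_column_expansion[OF assms] sum_distrib_left)
  finally show ?thesis .
qed

lemma det_cols_zero_column:
  assumes "k < N" and "\<And>i. i < N \<Longrightarrow> F k i = 0"
  shows "det_cols N F = 0"
proof -
  have "det_cols N F = det_cols N (F(k := F k))" by simp
  also have "\<dots> = 0" using assms by (simp only: det_cols_column_expansion) simp
  finally show ?thesis .
qed

lemma det_cols_identical_columns:
  assumes "a < N" "b < N" "a \<noteq> b" and "\<And>i. i < N \<Longrightarrow> F a i = F b i"
  shows "det_cols N F = 0"
  unfolding det_cols_def
  by (rule det_identical_columns[of _ N a b]) (use assms in \<open>auto intro!: eq_vecI\<close>)

lemma det_cols_swap:
  assumes "a < N" "b < N" "a \<noteq> b"
  shows "det_cols N (\<lambda>k. if k = a then F b else if k = b then F a else F k) = - det_cols N F"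
proof -
  have "swapcols a b (mat N N (\<lambda>(i, k). F k i))
      = mat N N (\<lambda>(i, k). (if k = a then F b else if k = b then F a else F k) i)"
    using assms by (intro eq_matI) (auto simp: mat_swapcols_def)
  then show ?thesis
    unfolding det_cols_def using det_swapcols[OF assms, of "mat N N (\<lambda>(i, k). F k i)"] by simp
qed

lemma det_cols_unit_first_column:
  assumes "\<And>i. i < Suc N \<Longrightarrow> F 0 i = (if i = 0 then 1 else 0)"
  shows "det_cols (Suc N) F = det_cols N (\<lambda>k i. F (Suc k) (Suc i))"
proof -
  let ?A = "mat (Suc N) (Suc N) (\<lambda>(i, k). F k i)"
  have "det ?A = (\<Sum>i<Suc N. ?A $$ (i, 0) * cofactor ?A i 0)"
    by (rule laplace_expansion_column) auto
  also have "\<dots> = cofactor ?A 0 0"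
    using assms by (subst sum.remove[of _ 0]) auto
  also have "\<dots> = det (mat N N (\<lambda>(i, k). F (Suc k) (Suc i)))"
    by (simp add: cofactor_def mat_delete_def) (intro arg_cong[of _ _ det] eq_matI; simp)
  finally show ?thesis unfolding det_cols_def .
qed

lemma det_cols_move_column:
  assumes "length (xs @ a # ys @ zs) = N"
  shows "det_cols N (\<lambda>k. f ((xs @ a # ys @ zs) ! k))
       = (-1) ^ length ys * det_cols N (\<lambda>k. f ((xs @ ys @ a # zs) ! k))"
  using assms
proof (induction ys arbitrary: xs)
  case Nil
  then show ?case by simp
next
  case (Cons b ys)
  let ?k = "length xs"
  have k: "?k < N" "Suc ?k < N" using Cons.prems by auto
  have "det_cols N (\<lambda>k. f ((xs @ a # b # ys @ zs) ! k))
      = - det_cols N (\<lambda>k. f (((xs @ [b]) @ a # ys @ zs) ! k))"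
  proof -
    have "det_cols N (\<lambda>k. f (((xs @ [b]) @ a # ys @ zs) ! k))
        = det_cols N (\<lambda>k. if k = ?k then f ((xs @ a # b # ys @ zs) ! Suc ?k)
            else if k = Suc ?k then f ((xs @ a # b # ys @ zs) ! ?k)
            else f ((xs @ a # b # ys @ zs) ! k))"
      by (intro det_cols_cong) (auto simp: nth_append nth_Cons')
    also have "\<dots> = - det_cols N (\<lambda>k. f ((xs @ a # b # ys @ zs) ! k))"
      using k by (intro det_cols_swap) auto
    finally show ?thesis by simp
  qed
  also have "\<dots> = - ((-1) ^ length ys * det_cols N (\<lambda>k. f ((xs @ b # ys @ a # zs) ! k)))"
    using Cons.IH[of "xs @ [b]"] Cons.prems by simp
  finally show ?case by simp
qed

section \<open>Wedge products and their coproduct\<close>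

lemma mu_eq_det_cols:
  "finite S \<Longrightarrow> card S = n \<Longrightarrow> mu n v S = det_cols n (\<lambda>k i. v i (sorted_list_of_set S ! k))"
  unfolding mu_def det_cols_expand by simp

lemma mu_eq_0_unless_card: "\<not> (finite S \<and> card S = n) \<Longrightarrow> mu n v S = 0"
  unfolding mu_def by auto

lemma mu_in_Cel:
  assumes "\<forall>i<n. v i \<in> vecs m"
  shows "mu n v \<in> Cel m"
  unfolding Cel_def
proof (intro CollectI allI impI)
  fix S :: "nat set" assume "\<not> S \<subseteq> {..<m}"
  then obtain s where s: "s \<in> S" "m \<le> s" by (metis lessThan_iff not_le subsetI)
  show "mu n v S = 0"
  proof (cases "finite S \<and> card S = n")
    case True
    then obtain k where k: "k < n" "sorted_list_of_set S ! k = s"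
      using s(1) by (metis in_set_conv_nth length_sorted_list_of_set set_sorted_list_of_set)
    have "det_cols n (\<lambda>k i. v i (sorted_list_of_set S ! k)) = 0"
      by (rule det_cols_zero_column[OF k(1)]) (use assms s(2) k(2) in \<open>simp add: vecs_def\<close>)
    then show ?thesis using True by (simp add: mu_eq_det_cols)
  qed (auto simp: mu_def)
qed

lemma sorted_list_of_set_split:
  fixes Y :: "nat set"
  assumes "finite Y" and "j \<notin> Y"
  shows "sorted_list_of_set Y = sorted_list_of_set {t\<in>Y. t < j} @ sorted_list_of_set {t\<in>Y. j < t}"
    and "sorted_list_of_set (insert j Y)
       = sorted_list_of_set {t\<in>Y. t < j} @ j # sorted_list_of_set {t\<in>Y. j < t}"
proof -
  let ?L = "sorted_list_of_set {t\<in>Y. t < j}" and ?R = "sorted_list_of_set {t\<in>Y. j < t}"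
  have L: "set ?L = {t\<in>Y. t < j}" and R: "set ?R = {t\<in>Y. j < t}"
    using assms(1) by auto
  have "t < j \<or> j < t" if "t \<in> Y" for t
    using that assms(2) by (cases "t = j") auto
  then have Y: "{t\<in>Y. t < j} \<union> {t\<in>Y. j < t} = Y"
    by blast
  have sorted: "sorted (?L @ j # ?R)"
    unfolding sorted_append by (simp add: L R less_imp_le)
  have distinct: "distinct (?L @ j # ?R)"
    by (auto simp: L R)
  have set: "set (?L @ j # ?R) = insert j Y"
    using L R Y by auto
  show ins: "sorted_list_of_set (insert j Y) = ?L @ j # ?R"
    using assms(1) by (intro sorted_distinct_set_unique) (simp_all only: sorted distinct set
        sorted_sorted_list_of_set distinct_sorted_list_of_set set_sorted_list_of_set finite_insert)
  have "sorted_list_of_set Y = remove1 j (sorted_list_of_set (insert j Y))"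
    using assms by (simp add: sorted_list_of_set_remove)
  also have "\<dots> = ?L @ ?R"
    using L by (simp add: ins remove1_append)
  finally show "sorted_list_of_set Y = ?L @ ?R" .
qed

lemma shsign_singleton_left: "shsign {j} U = (-1) ^ card {u\<in>U. u < j}"
proof -
  have "{(t, u). t \<in> {j} \<and> u \<in> U \<and> u < t} = (\<lambda>u. (j, u)) ` {u\<in>U. u < j}" by auto
  then show ?thesis unfolding shsign_def by (simp add: card_image inj_on_def)
qed

lemma shsign_singleton_right: "shsign Y {j} = (-1) ^ card {t\<in>Y. j < t}"
proof -
  have "{(t, u). t \<in> Y \<and> u \<in> {j} \<and> u < t} = (\<lambda>t. (t, j)) ` {t\<in>Y. j < t}" by auto
  then show ?thesis unfolding shsign_def by (simp add: card_image inj_on_def)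
qed

lemma coprod_mu_eq_0:
  assumes "\<not> (finite T \<and> finite U \<and> card T + card U = n)"
  shows "coprod (mu n v) T U = 0"
proof (cases "T \<inter> U = {}")
  case True
  then have "\<not> (finite (T \<union> U) \<and> card (T \<union> U) = n)"
    using assms by (auto simp: card_Un_disjoint)
  then show ?thesis using True by (simp add: coprod_def mu_eq_0_unless_card)
qed (simp add: coprod_def)

lemma det_cols_sorted_append_column:
  assumes Y: "finite Y" "j \<notin> Y" and n: "card Y + 1 = n"
  shows "det_cols n (\<lambda>k i. v i ((sorted_list_of_set Y @ [j]) ! k)) = shsign Y {j} * mu n v (insert j Y)"
proof -
  let ?L = "sorted_list_of_set {t\<in>Y. t < j}" and ?R = "sorted_list_of_set {t\<in>Y. j < t}"
  have len: "length (?L @ j # ?R @ []) = n"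
    using n arg_cong[OF sorted_list_of_set_split(1)[OF Y], of length] by simp
  have "mu n v (insert j Y) = det_cols n (\<lambda>k i. v i (sorted_list_of_set (insert j Y) ! k))"
    using Y n by (intro mu_eq_det_cols) auto
  also have "\<dots> = det_cols n (\<lambda>k i. v i ((?L @ j # ?R @ []) ! k))"
    by (simp only: sorted_list_of_set_split(2)[OF Y] append_Nil2)
  also have "\<dots> = (-1) ^ card {t\<in>Y. j < t} * det_cols n (\<lambda>k i. v i ((?L @ ?R @ [j]) ! k))"
    using det_cols_move_column[OF len] Y(1) by simp
  finally show ?thesis
    by (simp add: shsign_singleton_right sorted_list_of_set_split(1)[OF Y] flip: power_add mult_2)
qed

lemma det_cols_Cons_sorted_column:
  assumes U: "finite U" "j \<notin> U" and n: "card U + 1 = n"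
  shows "det_cols n (\<lambda>k i. v i ((j # sorted_list_of_set U) ! k)) = shsign {j} U * mu n v (insert j U)"
proof -
  let ?L = "sorted_list_of_set {t\<in>U. t < j}" and ?R = "sorted_list_of_set {t\<in>U. j < t}"
  have len: "length ([] @ j # ?L @ ?R) = n"
    using n arg_cong[OF sorted_list_of_set_split(1)[OF U], of length] by simp
  have "det_cols n (\<lambda>k i. v i (([] @ j # ?L @ ?R) ! k))
      = (-1) ^ card {t\<in>U. t < j} * det_cols n (\<lambda>k i. v i (([] @ ?L @ j # ?R) ! k))"
    using det_cols_move_column[OF len] U(1) by simp
  also have "det_cols n (\<lambda>k i. v i (([] @ ?L @ j # ?R) ! k)) = mu n v (insert j U)"
    unfolding append_Nil sorted_list_of_set_split(2)[OF U, symmetric]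
    using U n by (intro mu_eq_det_cols[symmetric]) auto
  finally show ?thesis
    by (simp add: shsign_singleton_left sorted_list_of_set_split(1)[OF U])
qed

lemma coprod_mu_singleton_right:
  assumes "finite Y" and "card Y + 1 = n"
  shows "coprod (mu n v) Y {j} = det_cols n (\<lambda>k i. v i ((sorted_list_of_set Y @ [j]) ! k))"
proof (cases "j \<in> Y")
  case True
  then obtain q where q: "q < card Y" "sorted_list_of_set Y ! q = j"
    using assms(1) by (metis in_set_conv_nth length_sorted_list_of_set set_sorted_list_of_set)
  have "det_cols n (\<lambda>k i. v i ((sorted_list_of_set Y @ [j]) ! k)) = 0"
    by (rule det_cols_identical_columns[of q n "card Y"]) (use q assms(2) in \<open>auto simp: nth_append\<close>)
  then show ?thesis using True by (simp add: coprod_def)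
next
  case False
  then show ?thesis
    unfolding det_cols_sorted_append_column[OF assms(1) False assms(2)] by (simp add: coprod_def)
qed

lemma coprod_mu_singleton_left:
  assumes "finite U" and "card U + 1 = n"
  shows "coprod (mu n v) {j} U = det_cols n (\<lambda>k i. v i ((j # sorted_list_of_set U) ! k))"
proof (cases "j \<in> U")
  case True
  then obtain q where q: "q < card U" "sorted_list_of_set U ! q = j"
    using assms(1) by (metis in_set_conv_nth length_sorted_list_of_set set_sorted_list_of_set)
  have "det_cols n (\<lambda>k i. v i ((j # sorted_list_of_set U) ! k)) = 0"
    by (rule det_cols_identical_columns[of 0 n "Suc q"]) (use q assms(2) in auto)
  then show ?thesis using True by (simp add: coprod_def)
next
  case False
  then show ?thesis
    unfolding det_cols_Cons_sorted_column[OF assms(1) False assms(2)] by (simp add: coprod_def)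
qed

section \<open>Contraction with a linear functional\<close>

definition contract_left :: "nat \<Rightarrow> (nat \<Rightarrow> 'k) \<Rightarrow> (nat set \<Rightarrow> 'k) \<Rightarrow> nat set \<Rightarrow> 'k::field" where
  "contract_left m lam a U = (\<Sum>j<m. lam j * coprod a {j} U)"

definition contract_right :: "nat \<Rightarrow> (nat \<Rightarrow> 'k) \<Rightarrow> (nat set \<Rightarrow> 'k) \<Rightarrow> nat set \<Rightarrow> 'k::field" where
  "contract_right m lam a Y = (\<Sum>j<m. lam j * coprod a Y {j})"

lemma contract_right_mu:
  assumes Y: "finite Y" and n: "card Y + 1 = n"
  shows "contract_right m lam (mu n v) Y
       = det_cols n (\<lambda>k i. if k < card Y then v i (sorted_list_of_set Y ! k) else \<Sum>j<m. lam j * v i j)"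
proof -
  define F where "F = (\<lambda>k i. v i ((sorted_list_of_set Y @ [0]) ! k))"
  have K: "card Y < n" using n by simp
  have col: "F(card Y := (\<lambda>i. v i j)) = (\<lambda>k i. v i ((sorted_list_of_set Y @ [j]) ! k))" for j
    by (auto simp: F_def nth_append)
  have "contract_right m lam (mu n v) Y = (\<Sum>j<m. lam j * det_cols n (F(card Y := (\<lambda>i. v i j))))"
    unfolding contract_right_def col coprod_mu_singleton_right[OF Y n] ..
  also have "\<dots> = det_cols n (F(card Y := (\<lambda>i. \<Sum>j<m. lam j * v i j)))"
    using det_cols_sum_column[OF K, where F=F and J="{..<m}" and c=lam and G="\<lambda>j i. v i j"] by simp
  also have "\<dots> = det_cols n (\<lambda>k i. if k < card Y then v i (sorted_list_of_set Y ! k) else \<Sum>j<m. lam j * v i j)"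
    using n by (intro det_cols_cong) (auto simp: F_def nth_append)
  finally show ?thesis .
qed

lemma contract_left_mu:
  assumes U: "finite U" and n: "card U + 1 = n"
  shows "contract_left m lam (mu n v) U
       = det_cols n (\<lambda>k i. if k = 0 then \<Sum>j<m. lam j * v i j else v i (sorted_list_of_set U ! (k - 1)))"
proof -
  define F where "F = (\<lambda>k i. v i ((0 # sorted_list_of_set U) ! k))"
  have K: "0 < n" using n by simp
  have col: "F(0 := (\<lambda>i. v i j)) = (\<lambda>k i. v i ((j # sorted_list_of_set U) ! k))" for j
    by (auto simp: F_def nth_Cons')
  have "contract_left m lam (mu n v) U = (\<Sum>j<m. lam j * det_cols n (F(0 := (\<lambda>i. v i j))))"
    unfolding contract_left_def col coprod_mu_singleton_left[OF U n] ..
  also have "\<dots> = det_cols n (F(0 := (\<lambda>i. \<Sum>j<m. lam j * v i j)))"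
    using det_cols_sum_column[OF K, where F=F and J="{..<m}" and c=lam and G="\<lambda>j i. v i j"] by simp
  also have "\<dots> = det_cols n (\<lambda>k i. if k = 0 then \<Sum>j<m. lam j * v i j else v i (sorted_list_of_set U ! (k - 1)))"
    by (intro det_cols_cong) (auto simp: F_def nth_Cons')
  finally show ?thesis .
qed

lemma contract_right_mu_eq_0:
  assumes lam_v: "\<And>i. i < n \<Longrightarrow> (\<Sum>j<m. lam j * v i j) = 0"
  shows "contract_right m lam (mu n v) Y = 0"
proof (cases "finite Y \<and> card Y + 1 = n")
  case True
  then show ?thesis
    unfolding contract_right_mu[OF conjunct1[OF True] conjunct2[OF True]]
    by (intro det_cols_zero_column[of "card Y"]) (use lam_v in auto)
next
  case False
  then show ?thesis
    unfolding contract_right_def by (intro sum.neutral) (simp add: coprod_mu_eq_0)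
qed

lemma contract_left_mu_Cons:
  assumes lam_x: "(\<Sum>j<m. lam j * x j) = 1"
    and lam_w: "\<And>i. i < l \<Longrightarrow> (\<Sum>j<m. lam j * w i j) = 0"
  shows "contract_left m lam (mu (Suc l) (\<lambda>i. if i = 0 then x else w (i - 1))) U = mu l w U"
proof (cases "finite U \<and> card U = l")
  case True
  let ?u = "\<lambda>i. if i = 0 then x else w (i - 1)"
  have "contract_left m lam (mu (Suc l) ?u) U
      = det_cols (Suc l) (\<lambda>k i. if k = 0 then \<Sum>j<m. lam j * ?u i j else ?u i (sorted_list_of_set U ! (k - 1)))"
    using True by (intro contract_left_mu) simp_all
  also have "\<dots> = det_cols l (\<lambda>k i. w i (sorted_list_of_set U ! k))"
    using lam_x lam_w by (subst det_cols_unit_first_column) auto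
  also have "\<dots> = mu l w U"
    using True by (simp add: mu_eq_det_cols)
  finally show ?thesis .
next
  case False
  then have "contract_left m lam (mu (Suc l) (\<lambda>i. if i = 0 then x else w (i - 1))) U = 0"
    unfolding contract_left_def by (intro sum.neutral) (simp add: coprod_mu_eq_0)
  then show ?thesis using False by (simp add: mu_eq_0_unless_card)
qed

section \<open>Bilinear forms and cyclicity\<close>

lemma form_basis_right:
  assumes "T \<subseteq> {..<m}"
  shows "form m B a (basis_el T) = (\<Sum>S\<in>Pow {..<m}. a S * B S T)"
  unfolding form_def basis_el_def using assms
  by (intro sum.cong refl) (simp add: if_distrib if_distribR sum.delta cong: if_cong)

lemma form_basis_left:
  assumes "S \<subseteq> {..<m}"
  shows "form m B (basis_el S) b = (\<Sum>T\<in>Pow {..<m}. b T * B S T)"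
proof -
  have "form m B (basis_el S) b = (\<Sum>S'\<in>Pow {..<m}. if S' = S then \<Sum>T\<in>Pow {..<m}. b T * B S T else 0)"
    unfolding form_def basis_el_def by (intro sum.cong) (auto simp: mult.commute)
  then show ?thesis using assms by simp
qed

lemma form_basis_el:
  assumes "S \<subseteq> {..<m}" and "T \<subseteq> {..<m}"
  shows "form m B (basis_el S) (basis_el T) = B S T"
  using assms by (simp add: form_basis_right) (simp add: basis_el_def if_distrib if_distribR sum.delta cong: if_cong)

lemma form_expand_right: "form m B a b = (\<Sum>T\<in>Pow {..<m}. b T * form m B a (basis_el T))"
proof -
  have "form m B a b = (\<Sum>T\<in>Pow {..<m}. \<Sum>S\<in>Pow {..<m}. b T * (a S * B S T))"
    unfolding form_def by (subst sum.swap) (simp add: mult_ac)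
  also have "\<dots> = (\<Sum>T\<in>Pow {..<m}. b T * form m B a (basis_el T))"
    by (intro sum.cong refl) (simp add: form_basis_right sum_distrib_left)
  finally show ?thesis .
qed

lemma form_expand_left: "form m B a b = (\<Sum>S\<in>Pow {..<m}. a S * form m B (basis_el S) b)"
  unfolding form_def[of m B a b] by (intro sum.cong refl) (simp add: form_basis_left sum_distrib_left mult_ac)

lemma form_sum_right:
  "form m B a (\<lambda>T. \<Sum>j\<in>J. c j * b j T) = (\<Sum>j\<in>J. c j * form m B a (b j))"
  unfolding form_def by (simp add: sum_distrib_left sum_distrib_right mult_ac sum.swap[of _ J])

lemma form_sum_left:
  "form m B (\<lambda>S. \<Sum>j\<in>J. c j * a j S) b = (\<Sum>j\<in>J. c j * form m B (a j) b)"
  unfolding form_def by (simp add: sum_distrib_left sum_distrib_right mult_ac sum.swap[of _ J])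

lemma form_zero_left: "form m B (\<lambda>_. 0) b = 0"
  by (simp add: form_def)

lemma form_zero_right: "form m B a (\<lambda>_. 0) = 0"
  by (simp add: form_def)

lemma basis_el_in_Cel: "S \<subseteq> {..<m} \<Longrightarrow> basis_el S \<in> Cel m"
  unfolding Cel_def basis_el_def by auto

lemma cyclic_formD:
  assumes "cyclic_form m B" and "a \<in> Cel m" and "b \<in> Cel m" and "X \<subseteq> {..<m}"
  shows "form m B a (coprod b X) = form m B (\<lambda>Y. coprod a Y X) b"
proof -
  have "form m B a (coprod b X) = (\<Sum>U\<in>Pow {..<m}. coprod b X U * form m B a (basis_el U))"
    by (rule form_expand_right)
  also have "\<dots> = (\<Sum>Y\<in>Pow {..<m}. coprod a Y X * form m B (basis_el Y) b)"
    using assms unfolding cyclic_form_def by blast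
  also have "\<dots> = form m B (\<lambda>Y. coprod a Y X) b"
    by (rule form_expand_left[symmetric])
  finally show ?thesis .
qed

lemma cyclic_form_contract_adjoint:
  assumes "cyclic_form m B" and "a \<in> Cel m" and "b \<in> Cel m"
  shows "form m B a (contract_left m lam b) = form m B (contract_right m lam a) b"
proof -
  have "form m B a (contract_left m lam b) = (\<Sum>j<m. lam j * form m B a (coprod b {j}))"
    unfolding contract_left_def by (rule form_sum_right)
  also have "\<dots> = (\<Sum>j<m. lam j * form m B (\<lambda>Y. coprod a Y {j}) b)"
    using assms by (simp add: cyclic_formD)
  also have "\<dots> = form m B (contract_right m lam a) b"
    unfolding contract_right_def by (rule form_sum_left[symmetric])
  finally show ?thesis .
qed

lemma cyclic_form_empty_left_eq_0:
  assumes "cyclic_form m B" and "T \<subseteq> {..<m}" and "x < m" and "x \<notin> T"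
  shows "B {} T = 0"
proof -
  have x: "{x} \<subseteq> {..<m}" using assms(3) by simp
  have T_x: "coprod (basis_el T) {x} = (\<lambda>_. 0)"
    using assms(4) by (auto simp: coprod_def basis_el_def)
  have x_x: "(\<lambda>Y. coprod (basis_el {x}) Y {x}) = basis_el {}"
    by (auto simp: coprod_def basis_el_def shsign_def fun_eq_iff)
  have "0 = form m B (basis_el {x}) (coprod (basis_el T) {x})"
    unfolding T_x by (rule form_zero_right[symmetric])
  also have "\<dots> = form m B (\<lambda>Y. coprod (basis_el {x}) Y {x}) (basis_el T)"
    by (rule cyclic_formD[OF assms(1) basis_el_in_Cel[OF x] basis_el_in_Cel[OF assms(2)] x])
  also have "\<dots> = B {} T"
    unfolding x_x using assms(2) by (simp add: form_basis_el)
  finally show ?thesis by simp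
qed

lemma exists_annihilating_functional:
  fixes w :: "nat \<Rightarrow> nat \<Rightarrow> 'k::field"
  assumes "l < m"
  shows "\<exists>lam x. x \<in> vecs m \<and> (\<Sum>j<m. lam j * x j) = 1 \<and> (\<forall>i<l. (\<Sum>j<m. lam j * w i j) = 0)"
proof -
  \<comment> \<open>lam is a kernel vector of the matrix of the w_i, padded by zero rows to a singular square matrix.\<close>
  let ?A = "mat m m (\<lambda>(i, j). if i < l then w i j else 0) :: 'k mat"
  have "\<not> m - 1 < l" using assms by linarith
  then have "det ?A = 0"
    using laplace_expansion_row[of ?A m "m - 1"] assms by simp
  then obtain u where u: "u \<in> carrier_vec m" "u \<noteq> 0\<^sub>v m" "?A *\<^sub>v u = 0\<^sub>v m"
    using det_0_iff_vec_prod_zero_field[of ?A m] by auto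
  obtain j0 where j0: "j0 < m" "u $ j0 \<noteq> 0"
    using u(1,2) by (metis eq_vecI carrier_vecD index_zero_vec)
  define x where "x j = (if j = j0 then inverse (u $ j0) else 0)" for j
  have "x \<in> vecs m"
    using j0(1) by (simp add: vecs_def x_def)
  moreover have "(\<Sum>j<m. u $ j * x j) = 1"
    using j0 by (subst sum.remove[of _ j0]) (auto simp: x_def)
  moreover have "(\<Sum>j<m. u $ j * w i j) = 0" if "i < l" for i
  proof -
    have "(?A *\<^sub>v u) $ i = 0" using u(3) that assms by simp
    then show ?thesis
      using u(1) that assms by (simp add: scalar_prod_def atLeast0LessThan mult.commute)
  qed
  ultimately show ?thesis by blast
qed

lemma in_span_annihilated:
  assumes "in_span l w y" and lam_w: "\<forall>i<l. (\<Sum>j<m. lam j * w i j) = 0"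
  shows "(\<Sum>j<m. lam j * y j) = 0"
proof -
  obtain c where c: "\<And>j. y j = (\<Sum>k<l. c k * w k j)"
    using assms(1) unfolding in_span_def by blast
  have "(\<Sum>j<m. lam j * y j) = (\<Sum>j<m. \<Sum>k<l. c k * (lam j * w k j))"
    by (simp add: c sum_distrib_left mult_ac)
  also have "\<dots> = (\<Sum>k<l. c k * (\<Sum>j<m. lam j * w k j))"
    by (subst sum.swap) (simp add: sum_distrib_left)
  also have "\<dots> = 0"
    using lam_w by simp
  finally show ?thesis .
qed

lemma cyclic_form_unit_mu_eq_0:
  assumes "cyclic_form m B" and "n < m"
  shows "form m B unit_el (mu n v) = 0"
proof -
  have zero: "mu n v T * B {} T = 0" if T: "T \<subseteq> {..<m}" for T
  proof (cases "card T = n")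
    case True
    then have "T \<noteq> {..<m}" using assms(2) by auto
    with T obtain x where "x \<in> {..<m} - T" by blast
    then have "x < m" "x \<notin> T" by auto
    then show ?thesis using cyclic_form_empty_left_eq_0[OF assms(1) T] by simp
  qed (simp add: mu_eq_0_unless_card)
  have "form m B unit_el (mu n v) = (\<Sum>T\<in>Pow {..<m}. mu n v T * B {} T)"
    unfolding unit_el_def by (rule form_basis_left) simp
  also have "\<dots> = 0"
    using zero by (intro sum.neutral) simp
  finally show ?thesis .
qed

lemma cyclic_form_mu_mu_eq_0:
  assumes cyc: "cyclic_form m B" and "l < m"
    and v: "\<forall>i<n. v i \<in> vecs m" and w: "\<forall>j<l. w j \<in> vecs m"
    and span: "\<forall>i<n. in_span l w (v i)"
  shows "form m B (mu n v) (mu l w) = 0"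
proof -
  obtain lam x where x: "x \<in> vecs m" and lam_x: "(\<Sum>j<m. lam j * x j) = 1"
    and lam_w: "\<forall>i<l. (\<Sum>j<m. lam j * w i j) = 0"
    using exists_annihilating_functional[OF \<open>l < m\<close>] by blast
  let ?u = "\<lambda>i. if i = 0 then x else w (i - 1)"
  have u: "\<forall>i<Suc l. ?u i \<in> vecs m" using x w by auto
  have left: "contract_left m lam (mu (Suc l) ?u) = mu l w"
    using lam_x lam_w by (intro ext contract_left_mu_Cons) auto
  have "(\<Sum>j<m. lam j * v i j) = 0" if "i < n" for i
    using span that by (intro in_span_annihilated[OF _ lam_w]) simp
  then have right: "contract_right m lam (mu n v) = (\<lambda>_. 0)"
    by (intro ext contract_right_mu_eq_0)
  have "form m B (mu n v) (mu l w) = form m B (contract_right m lam (mu n v)) (mu (Suc l) ?u)"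
    using cyclic_form_contract_adjoint[OF cyc mu_in_Cel[OF v] mu_in_Cel[OF u], where lam=lam]
    unfolding left .
  also have "\<dots> = 0"
    unfolding right by (rule form_zero_left)
  finally show ?thesis .
qed

theorem proposition9p1:
  fixes m :: nat and d :: int and B :: "nat set \<Rightarrow> nat set \<Rightarrow> 'k::field_char_0"
  assumes "m \<ge> 1"
    and "symmetric_form_deg m d B"
    and "cyclic_form m B"
  shows "(\<forall>n (v :: nat \<Rightarrow> nat \<Rightarrow> 'k). n \<le> m - 1 \<and> (\<forall>i<n. v i \<in> vecs m) \<and> lin_indep n v
            \<longrightarrow> form m B unit_el (mu n v) = 0)
       \<and> (\<forall>n l (v :: nat \<Rightarrow> nat \<Rightarrow> 'k) w. l \<le> m - 1
            \<and> (\<forall>i<n. v i \<in> vecs m) \<and> (\<forall>j<l. w j \<in> vecs m)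
            \<and> lin_indep n v \<and> lin_indep l w \<and> (\<forall>i<n. in_span l w (v i))
            \<longrightarrow> form m B (mu n v) (mu l w) = 0)"
proof (intro conjI allI impI)
  fix n and v :: "nat \<Rightarrow> nat \<Rightarrow> 'k"
  assume "n \<le> m - 1 \<and> (\<forall>i<n. v i \<in> vecs m) \<and> lin_indep n v"
  then show "form m B unit_el (mu n v) = 0"
    using assms(1) by (intro cyclic_form_unit_mu_eq_0[OF assms(3)]) auto
next
  fix n l and v w :: "nat \<Rightarrow> nat \<Rightarrow> 'k"
  assume "l \<le> m - 1 \<and> (\<forall>i<n. v i \<in> vecs m) \<and> (\<forall>j<l. w j \<in> vecs m)
    \<and> lin_indep n v \<and> lin_indep l w \<and> (\<forall>i<n. in_span l w (v i))"
  then show "form m B (mu n v) (mu l w) = 0"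
    using assms(1) by (intro cyclic_form_mu_mu_eq_0[OF assms(3)]) auto
qed

end
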